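(* Let $s\ge0$ be an integer and let $G$ be a graph such that $G$ is not an $s$-star, but $G\setminus v$ is an $s$-star for every $v\in V(G)$. Then $|V(G)|\le 4s+5$.
   Context: Graphs are finite and simple. A set $X\subseteq V(G)$ is a crown of $G$ if every vertex $v\in V(G)$ is either adjacent to all vertices of $X\setminus\{v\}$ or adjacent to none of them (in particular $G[X]$ is complete or edgeless). A set $S\subseteq V(G)$ is a core of $G$ if $V(G)\setminus S$ is a crown. $G$ is an $s$-star if it has a core of size at most $s$. *)

theory Defs
  imports Main
begin

text \<open>A finite simple graph is given by a finite vertex set V and an edge relation E
  that is symmetric and irreflexive (only its restriction to V matters).
  Deleting a vertex v gives the induced subgraph on V - {v} with the same E.\<close>

definition simple_graph :: "'a set \<Rightarrow> ('a \<Rightarrow> 'a \<Rightarrow> bool) \<Rightarrow> bool" where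
  "simple_graph V E \<longleftrightarrow> finite V \<and> (\<forall>u\<in>V. \<forall>w\<in>V. E u w \<longleftrightarrow> E w u) \<and> (\<forall>u\<in>V. \<not> E u u)"

definition crown :: "'a set \<Rightarrow> ('a \<Rightarrow> 'a \<Rightarrow> bool) \<Rightarrow> 'a set \<Rightarrow> bool" where
  "crown V E X \<longleftrightarrow> X \<subseteq> V \<and>
     (\<forall>v\<in>V. (\<forall>x\<in>X - {v}. E v x) \<or> (\<forall>x\<in>X - {v}. \<not> E v x))"

definition core :: "'a set \<Rightarrow> ('a \<Rightarrow> 'a \<Rightarrow> bool) \<Rightarrow> 'a set \<Rightarrow> bool" where
  "core V E S \<longleftrightarrow> S \<subseteq> V \<and> crown V E (V - S)"

definition s_star :: "nat \<Rightarrow> 'a set \<Rightarrow> ('a \<Rightarrow> 'a \<Rightarrow> bool) \<Rightarrow> bool" where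
  "s_star s V E \<longleftrightarrow> (\<exists>S. core V E S \<and> card S \<le> s)"

end

theory Submission
  imports Defs
begin

text \<open>Suppose \<open>|V| \<ge> 3s + 5\<close>. Every \<open>G - v\<close> has a crown \<open>T\<^sub>v\<close> missing at most \<open>s + 1\<close>
  vertices of \<open>G\<close>. For distinct \<open>a, b\<close>, every vertex of \<open>G\<close> lies in \<open>G - a\<close> or in \<open>G - b\<close>,
  so \<open>Y = T\<^sub>a \<inter> T\<^sub>b\<close> is a crown of \<open>G\<close>. Pick \<open>c \<in> Y\<close>; counting shows that \<open>T\<^sub>c\<close> and \<open>Y\<close>
  share two vertices, and a crown of \<open>G\<close> containing \<open>c\<close> and a crown of \<open>G - c\<close> sharing two
  vertices have a crown of \<open>G\<close> as their union.
  Hence \<open>Y \<union> T\<^sub>c \<supseteq> T\<^sub>c \<union> {c}\<close> is a crown of \<open>G\<close> missing at most \<open>s\<close> vertices, so \<open>G\<close> is an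
  \<open>s\<close>-star after all. This even gives \<open>|V| \<le> 3s + 4\<close>.\<close>

lemma crown_subset: "crown V E X \<Longrightarrow> X \<subseteq> V"
  unfolding crown_def by blast

lemma crown_Int_vertex_deleted:
  assumes "crown (V - {a}) E X" "crown (V - {b}) E Y" "a \<noteq> b"
  shows "crown V E (X \<inter> Y)"
  unfolding crown_def
proof (intro conjI ballI)
  show "X \<inter> Y \<subseteq> V"
    using crown_subset[OF assms(1)] by blast
next
  fix v assume "v \<in> V"
  then have "v \<in> V - {a} \<or> v \<in> V - {b}"
    using assms(3) by blast
  then show "(\<forall>x\<in>X \<inter> Y - {v}. E v x) \<or> (\<forall>x\<in>X \<inter> Y - {v}. \<not> E v x)"
    using assms(1,2) unfolding crown_def by blast
qed

lemma crown_Un: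
  assumes sym: "\<forall>u\<in>V. \<forall>w\<in>V. E u w \<longleftrightarrow> E w u"
    and M: "crown V E M" and c: "c \<in> M" and T: "crown (V - {c}) E T"
    and p: "p \<in> M" "p \<in> T" and q: "q \<in> M" "q \<in> T" and "p \<noteq> q"
  shows "crown V E (M \<union> T)"
  unfolding crown_def
proof (intro conjI ballI)
  have MV: "M \<subseteq> V" and TV: "T \<subseteq> V - {c}"
    using M T by (auto dest: crown_subset)
  then show "M \<union> T \<subseteq> V"
    by blast
  have M_uniform: "(\<forall>x\<in>M - {u}. E u x) \<or> (\<forall>x\<in>M - {u}. \<not> E u x)" if "u \<in> V" for u
    using M that unfolding crown_def by blast
  have T_uniform: "(\<forall>x\<in>T - {u}. E u x) \<or> (\<forall>x\<in>T - {u}. \<not> E u x)" if "u \<in> V - {c}" for u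
    using T that unfolding crown_def by blast
  fix v assume v: "v \<in> V"
  show "(\<forall>x\<in>M \<union> T - {v}. E v x) \<or> (\<forall>x\<in>M \<union> T - {v}. \<not> E v x)"
  proof (cases "v = c")
    case False
    \<comment> \<open>\<open>v\<close> sees \<open>M\<close> and \<open>T\<close> uniformly, and one of \<open>p, q\<close> is a common vertex other than \<open>v\<close>\<close>
    with M_uniform[OF v] T_uniform[of v] v p q \<open>p \<noteq> q\<close> show ?thesis
      by blast
  next
    case True
    have "c \<noteq> p" "c \<noteq> q" and pV: "p \<in> V"
      using p q TV by auto
    have "E c x = E c p" if x: "x \<in> T - M" for x
    proof -
      have "x \<in> V - {c}"
        using x TV by blast
      then have "E x c = E x p" "E p x = E p q"
        using M_uniform[of x] T_uniform[of p] x c p q pV \<open>c \<noteq> p\<close> \<open>p \<noteq> q\<close> by blast+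
      moreover have "E p c = E p q"
        using M_uniform[OF pV] c q \<open>c \<noteq> p\<close> \<open>p \<noteq> q\<close> by blast
      ultimately show ?thesis
        using sym \<open>x \<in> V - {c}\<close> pV c MV by (metis DiffD1 subsetD)
    qed
    moreover have "E c x = E c p" if "x \<in> M - {c}" for x
      using M_uniform[of c] c MV p that \<open>c \<noteq> p\<close> by blast
    ultimately have "E c x = E c p" if "x \<in> M \<union> T - {c}" for x
      using that by blast
    then show ?thesis
      using True by blast
  qed
qed

lemma s_star_iff_large_crown:
  assumes "finite V"
  shows "s_star s V E \<longleftrightarrow> (\<exists>X. crown V E X \<and> card V \<le> card X + s)"
proof
  assume "s_star s V E"
  then obtain S where "S \<subseteq> V" "crown V E (V - S)" "card S \<le> s"
    unfolding s_star_def core_def by blast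
  moreover have "card V \<le> card (V - S) + card S"
    using assms \<open>S \<subseteq> V\<close> by (simp add: card_Diff_subset finite_subset card_mono)
  ultimately show "\<exists>X. crown V E X \<and> card V \<le> card X + s"
    by (intro exI[of _ "V - S"]) auto
next
  assume "\<exists>X. crown V E X \<and> card V \<le> card X + s"
  then obtain X where X: "crown V E X" "card V \<le> card X + s"
    by blast
  have "X \<subseteq> V"
    using X(1) by (rule crown_subset)
  then have "core V E (V - X)" "card (V - X) \<le> s"
    using X assms by (auto simp: core_def double_diff card_Diff_subset finite_subset)
  then show "s_star s V E"
    unfolding s_star_def by blast
qed

lemma card_add_le_card_Int:
  assumes "finite V" "A \<subseteq> V" "B \<subseteq> V"
  shows "card A + card B \<le> card V + card (A \<inter> B)"
proof -
  have "card (A \<union> B) \<le> card V"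
    using assms by (intro card_mono) auto
  moreover have "card (A \<union> B) + card (A \<inter> B) = card A + card B"
    using assms card_Un_Int[of A B] by (metis finite_subset)
  ultimately show ?thesis
    by linarith
qed

lemma card_le_if_vertex_critical_s_star:
  assumes G: "simple_graph V E"
    and not_star: "\<not> s_star s V E"
    and critical: "\<forall>v\<in>V. s_star s (V - {v}) E"
  shows "card V \<le> 3 * s + 4"
proof (rule ccontr)
  assume big: "\<not> card V \<le> 3 * s + 4"
  have fin: "finite V" and sym: "\<forall>u\<in>V. \<forall>w\<in>V. E u w \<longleftrightarrow> E w u"
    using G unfolding simple_graph_def by auto
  have "\<exists>X. crown (V - {v}) E X \<and> card V \<le> card X + s + 1" if "v \<in> V" for v
    using critical that fin s_star_iff_large_crown[of "V - {v}" s E] by fastforce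
  then obtain T where T: "\<And>v. v \<in> V \<Longrightarrow> crown (V - {v}) E (T v)"
    and card_T: "\<And>v. v \<in> V \<Longrightarrow> card V \<le> card (T v) + s + 1"
    by metis
  have T_sub: "T v \<subseteq> V - {v}" if "v \<in> V" for v
    using T[OF that] by (rule crown_subset)
  have "\<not> card V \<le> Suc 0"
    using big by linarith
  then obtain a b where ab: "a \<in> V" "b \<in> V" "a \<noteq> b"
    using card_le_Suc0_iff_eq[OF fin] by blast
  define Y where "Y = T a \<inter> T b"
  have Y: "crown V E Y"
    unfolding Y_def using crown_Int_vertex_deleted[OF T T] ab by blast
  have "card (T a) + card (T b) \<le> card V + card Y"
    unfolding Y_def using card_add_le_card_Int[OF fin] T_sub ab by blast
  then have card_Y: "card V \<le> card Y + 2 * s + 2"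
    using card_T[OF ab(1)] card_T[OF ab(2)] by linarith
  then obtain c where c: "c \<in> Y"
    using big by fastforce
  have cV: "c \<in> V"
    using c crown_subset[OF Y] by blast
  have "card (T c) + card Y \<le> card V + card (T c \<inter> Y)"
    using card_add_le_card_Int[OF fin] T_sub[OF cV] crown_subset[OF Y] by blast
  then have "\<not> card (T c \<inter> Y) \<le> Suc 0"
    using card_Y card_T[OF cV] big by linarith
  then obtain p q where pq: "p \<in> T c \<inter> Y" "q \<in> T c \<inter> Y" "p \<noteq> q"
    using card_le_Suc0_iff_eq[of "T c \<inter> Y"] fin crown_subset[OF Y] by (meson finite_Int finite_subset)
  have Z: "crown V E (Y \<union> T c)"
    using crown_Un[OF sym Y c T[OF cV]] pq by blast
  have "card (insert c (T c)) \<le> card (Y \<union> T c)"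
    using c crown_subset[OF Z] fin by (intro card_mono) (auto intro: finite_subset)
  moreover have "card (insert c (T c)) = card (T c) + 1"
    using T_sub[OF cV] fin by (subst card_insert_disjoint) (auto intro: finite_subset)
  ultimately have "card V \<le> card (Y \<union> T c) + s"
    using card_T[OF cV] by linarith
  then show False
    using Z not_star s_star_iff_large_crown[OF fin] by blast
qed

theorem lemma4p1:
  fixes s :: nat and V :: "'a set" and E :: "'a \<Rightarrow> 'a \<Rightarrow> bool"
  assumes "simple_graph V E"
    and "\<not> s_star s V E"
    and "\<forall>v\<in>V. s_star s (V - {v}) E"
  shows "card V \<le> 4 * s + 5"
  using card_le_if_vertex_critical_s_star[OF assms] by linarith

end
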